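(* Let $P\ge1$ be an integer and let $r\in\mathbb{F}_q[t]$ be monic with $\rho=\deg(r)\le P$. Then $$I_r=\begin{cases}\dfrac{|r|^nq^{n+1}}{q^{2P}}\displaystyle\sum_{k=0}^{P-\rho-1}q^{nk}\,S_{t^{P-\rho-k-1}}(f)&\text{if }\rho\le P-1,\\[2mm] q^{P(n-2)}&\text{if }\rho=P.\end{cases}$$
   Context: $q$ is a power of an odd prime $p$, $n\ge1$, and $f=a_1x_1^2+\dots+a_nx_n^2$ with $a_1,\dots,a_n\in\mathbb{F}_q^\times$. $K_\infty=\mathbb{F}_q((1/t))$ is the field of Laurent series $\alpha=\sum_{i\le M}c_it^i$ ($c_i\in\mathbb{F}_q$); $\mathrm{ord}(\alpha)$ is the largest $i$ with $c_i\ne0$, $|\alpha|=q^{\mathrm{ord}(\alpha)}$, $|0|=0$, and for vectors $|\boldsymbol\alpha|=\max_i|\alpha_i|$. $\mathbb{T}=\{\alpha\in K_\infty:|\alpha|<1\}$, and $d\theta$ is the Haar measure on $K_\infty$ normalised so that $\mathbb{T}$ has measure $1$. The character $\psi:K_\infty\to\mathbb{C}^\times$ is $\psi(\sum_{i\le M}c_it^i)=\exp(2\pi i\,\mathrm{Tr}_{\mathbb{F}_q/\mathbb{F}_p}(c_{-1})/p)$. For $\alpha\in K_\infty$, $S(\alpha)=\sum_{\mathbf{x}\in\mathbb{F}_q[t]^n,\,|\mathbf{x}|<q^P}\psi(\alpha f(\mathbf{x}))$, and $I_r=\int_{\{\theta\in\mathbb{T}:|\theta|<1/(|r|q^P)\}}S(\theta)\,d\theta$.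 For $a,r\in\mathbb{F}_q[t]$, $r\ne0$, $S_{a,r}(f)=\sum_{\mathbf{b}\in\mathbb{F}_q[t]^n,\,|\mathbf{b}|<|r|}\psi(af(\mathbf{b})/r)$, and for monic $r$, $S_r(f)=\sum_{a\in\mathbb{F}_q[t],\,|a|<|r|,\,\gcd(a,r)=1}S_{a,r}(f)$ (so $S_1(f)=1$). *)

theory Defs
  imports "HOL-Probability.Probability" "HOL-Computational_Algebra.Computational_Algebra"
begin

text \<open>The completion K_infinity = F_q((1/t)) is modelled by formal Laurent series 'a fls in the
 variable X = 1/t: the coefficient of t^i of alpha is  fls_nth alpha (-i).\<close>

definition qq :: "'a::{finite,field} itself \<Rightarrow> real" where
  "qq _ = real CARD('a)"

definition fdeg :: "'a::{finite,field} itself \<Rightarrow> nat" where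
  "fdeg _ = (THE e. CHAR('a) ^ e = CARD('a))"

definition ftrace :: "'a::{finite,field} \<Rightarrow> 'a" where
  "ftrace c = (\<Sum>i<fdeg TYPE('a). c ^ (CHAR('a) ^ i))"

text \<open>The trace as an integer in 0..p-1 (the trace lies in the prime field).\<close>
definition ftrace_nat :: "'a::{finite,field} \<Rightarrow> nat" where
  "ftrace_nat c = (THE k. k < CHAR('a) \<and> of_nat k = ftrace c)"

text \<open>The character psi on K_infinity: exp(2 pi i Tr(c_{-1})/p), c_{-1} the coefficient of t^{-1}.\<close>
definition psi :: "'a::{finite,field} fls \<Rightarrow> complex" where
  "psi \<alpha> = exp (2 * pi * \<i> * of_nat (ftrace_nat (fls_nth \<alpha> 1)) / of_nat CHAR('a))"

definition poly_to_fls :: "'a::{finite,field} poly \<Rightarrow> 'a fls" where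
  "poly_to_fls p = (\<Sum>j\<le>degree p. fls_const (coeff p j) * fls_X_inv ^ j)"

definition ls_abs :: "'a::{finite,field} fls \<Rightarrow> real" where
  "ls_abs \<alpha> = (if \<alpha> = 0 then 0 else qq TYPE('a) powr (real_of_int (- fls_subdegree \<alpha>)))"

definition poly_abs :: "'a::{finite,field} poly \<Rightarrow> real" where
  "poly_abs b = ls_abs (poly_to_fls b)"

definition fquad :: "(nat \<Rightarrow> 'a::{finite,field}) \<Rightarrow> nat \<Rightarrow> (nat \<Rightarrow> 'a poly) \<Rightarrow> 'a poly" where
  "fquad a n x = (\<Sum>i<n. smult (a i) (x i ^ 2))"

definition pvecs :: "nat \<Rightarrow> real \<Rightarrow> (nat \<Rightarrow> 'a::{finite,field} poly) set" where
  "pvecs n B = PiE {..<n} (\<lambda>_. {b. poly_abs b < B})"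

definition Ssum :: "(nat \<Rightarrow> 'a::{finite,field}) \<Rightarrow> nat \<Rightarrow> nat \<Rightarrow> 'a fls \<Rightarrow> complex" where
  "Ssum a n P \<alpha> = (\<Sum>x\<in>pvecs n (qq TYPE('a) ^ P). psi (\<alpha> * poly_to_fls (fquad a n x)))"

definition Sar :: "(nat \<Rightarrow> 'a::{finite,field}) \<Rightarrow> nat \<Rightarrow> 'a poly \<Rightarrow> 'a poly \<Rightarrow> complex" where
  "Sar a n c r = (\<Sum>b\<in>pvecs n (poly_abs r).
      psi (poly_to_fls (c * fquad a n b) / poly_to_fls r))"

definition Sr :: "(nat \<Rightarrow> 'a::{finite,field}) \<Rightarrow> nat \<Rightarrow> 'a poly \<Rightarrow> complex" where
  "Sr a n r = (\<Sum>c\<in>{c. poly_abs c < poly_abs r \<and> coprime c r}. Sar a n c r)"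

text \<open>T = {|alpha| < 1} is identified with digit sequences d, alpha = sum_i d_i t^{-(i+1)};
 the Haar measure on T (total mass 1) is the product of uniform probability measures on F_q.\<close>
definition digits_to_fls :: "(nat \<Rightarrow> 'a::{finite,field}) \<Rightarrow> 'a fls" where
  "digits_to_fls d = fls_X * fps_to_fls (Abs_fps d)"

definition haarT :: "(nat \<Rightarrow> 'a::{finite,field}) measure" where
  "haarT = PiM UNIV (\<lambda>_. uniform_count_measure UNIV)"

definition Ir :: "(nat \<Rightarrow> 'a::{finite,field}) \<Rightarrow> nat \<Rightarrow> nat \<Rightarrow> 'a poly \<Rightarrow> complex" where
  "Ir a n P r = set_lebesgue_integral haarT
      {d. ls_abs (digits_to_fls d) < 1 / (poly_abs r * qq TYPE('a) ^ P)}
      (\<lambda>d. Ssum a n P (digits_to_fls d))"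

end

theory Submission
  imports Defs
begin

(*
  Since deg f(x) <= 2P - 2 for |x| < q^P, S(theta) only depends on the first 2P - 1 digits
  of theta, so I_r is q^-N times the sum of S over the digit vectors of length
  N = max (2P - 1) (P + deg r) whose first P + deg r digits vanish.  Apart from the zero
  vector, which contributes q^(nP) = q^(nP) S_1(f), these are sorted by the position N - j of
  their first nonzero digit: the vectors of that shell are the coefficient lists of the
  polynomials c of degree < j prime to t, and the pairing with f(x) reads off the top j
  coefficients of f(x).  Reversing each x_i (x_i(t) |-> t^(P-1) x_i(1/t)) moves these to the
  bottom, where the pairing becomes the coefficient of t^(j-1) in c f(x), i.e. the residue of
  c f(x) / t^j.  That only depends on x modulo t^j, so the shell contributes
  q^(n(P-j)) S_{t^j}(f).
*)

section \<open>Polynomials of bounded degree\<close>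

definition polys_deg_less :: "nat \<Rightarrow> 'a::zero poly set" where
  "polys_deg_less k = {b. \<forall>i\<ge>k. coeff b i = 0}"

lemma polys_deg_less_mono: "j \<le> k \<Longrightarrow> polys_deg_less j \<subseteq> polys_deg_less k"
  by (auto simp: polys_deg_less_def)

lemma polys_deg_less_iff_degree: "1 \<le> k \<Longrightarrow> b \<in> polys_deg_less k \<longleftrightarrow> degree b < k"
  using degree_le[of "k - 1" b] by (auto simp: polys_deg_less_def coeff_eq_0)

lemma mult_in_polys_deg_less:
  fixes p q :: "'a::comm_semiring_0 poly"
  assumes "p \<in> polys_deg_less j" "q \<in> polys_deg_less k"
  shows "p * q \<in> polys_deg_less (j + k - 1)"
  unfolding polys_deg_less_def mem_Collect_eq coeff_mult
proof (intro allI impI sum.neutral ballI)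
  fix i u assume "j + k - 1 \<le> i" "u \<in> {..i}"
  then have "j \<le> u \<or> k \<le> i - u" by auto
  then show "coeff p u * coeff q (i - u) = 0" using assms by (auto simp: polys_deg_less_def)
qed

definition poly_of_coeffs :: "nat \<Rightarrow> (nat \<Rightarrow> 'a) \<Rightarrow> 'a::zero poly" where
  "poly_of_coeffs k v = Poly (map v [0..<k])"

lemma coeff_poly_of_coeffs: "coeff (poly_of_coeffs k v) i = (if i < k then v i else 0)"
  by (simp add: poly_of_coeffs_def nth_default_def)

lemma poly_of_coeffs_in_polys_deg_less: "poly_of_coeffs k v \<in> polys_deg_less k"
  by (simp add: polys_deg_less_def coeff_poly_of_coeffs)

lemma bij_betw_coeffs_polys_deg_less:
  "bij_betw (\<lambda>b. restrict (coeff b) {..<k}) (polys_deg_less k) (PiE {..<k} (\<lambda>_. UNIV))"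
proof (rule bij_betw_byWitness[where f'="poly_of_coeffs k"])
  show "\<forall>b\<in>polys_deg_less k. poly_of_coeffs k (restrict (coeff b) {..<k}) = b"
    by (auto simp: polys_deg_less_def coeff_poly_of_coeffs intro!: poly_eqI)
  show "\<forall>v\<in>PiE {..<k} (\<lambda>_. UNIV). restrict (coeff (poly_of_coeffs k v)) {..<k} = v"
    by (auto simp: coeff_poly_of_coeffs PiE_iff extensional_def fun_eq_iff)
  show "poly_of_coeffs k ` PiE {..<k} (\<lambda>_. UNIV) \<subseteq> polys_deg_less k"
    using poly_of_coeffs_in_polys_deg_less by blast
qed (simp add: image_subset_iff)

lemma card_polys_deg_less: "card (polys_deg_less k :: 'a::{finite,zero} poly set) = CARD('a) ^ k"
  using bij_betw_same_card[OF bij_betw_coeffs_polys_deg_less] by (simp add: card_PiE)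

definition poly_vecs :: "nat \<Rightarrow> nat \<Rightarrow> (nat \<Rightarrow> 'a::zero poly) set" where
  "poly_vecs n k = PiE {..<n} (\<lambda>_. polys_deg_less k)"

lemma card_poly_vecs: "card (poly_vecs n k :: (nat \<Rightarrow> 'a::{finite,zero} poly) set) = CARD('a) ^ (n * k)"
  by (simp add: poly_vecs_def card_PiE card_polys_deg_less power_mult mult.commute)

definition poly_reverse :: "nat \<Rightarrow> 'a::zero poly \<Rightarrow> 'a poly" where
  "poly_reverse k b = poly_of_coeffs k (\<lambda>i. coeff b (k - 1 - i))"

lemma coeff_poly_reverse: "coeff (poly_reverse k b) i = (if i < k then coeff b (k - 1 - i) else 0)"
  by (simp add: poly_reverse_def coeff_poly_of_coeffs)

lemma poly_reverse_in_polys_deg_less: "poly_reverse k b \<in> polys_deg_less k"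
  by (simp add: poly_reverse_def poly_of_coeffs_in_polys_deg_less)

lemma poly_reverse_poly_reverse: "b \<in> polys_deg_less k \<Longrightarrow> poly_reverse k (poly_reverse k b) = b"
  by (rule poly_eqI) (auto simp: coeff_poly_reverse polys_deg_less_def)

lemma poly_reverse_eq_reflect_poly:
  fixes b :: "'a::comm_semiring_1 poly"
  assumes "b \<in> polys_deg_less k" "1 \<le> k"
  shows "poly_reverse k b = monom 1 (k - 1 - degree b) * reflect_poly b"
proof (rule poly_eqI)
  fix s
  have "degree b < k" using assms polys_deg_less_iff_degree by blast
  then show "coeff (poly_reverse k b) s = coeff (monom 1 (k - 1 - degree b) * reflect_poly b) s"
    by (auto simp: coeff_poly_reverse coeff_monom_mult coeff_reflect_poly coeff_eq_0)
qed

lemma coeff_poly_reverse_mult: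
  fixes p q :: "'a::idom poly"
  assumes "p \<in> polys_deg_less k" "q \<in> polys_deg_less k" "1 \<le> k" "s \<le> 2 * k - 2"
  shows "coeff (poly_reverse k p * poly_reverse k q) s = coeff (p * q) (2 * k - 2 - s)"
proof (cases "p = 0 \<or> q = 0")
  case True
  have "poly_reverse k 0 = (0 :: 'a poly)" by (rule poly_eqI) (simp add: coeff_poly_reverse)
  with True show ?thesis by auto
next
  case False
  define e where "e = (k - 1 - degree p) + (k - 1 - degree q)"
  have deg: "degree p < k" "degree q < k" "degree (p * q) = degree p + degree q"
    using assms False by (simp_all add: polys_deg_less_iff_degree degree_mult_eq)
  have rev: "poly_reverse k p * poly_reverse k q = monom 1 e * reflect_poly (p * q)"
    using assms by (simp add: poly_reverse_eq_reflect_poly e_def mult_monom reflect_poly_mult ac_simps)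
  have deg_e: "e + degree (p * q) = 2 * k - 2" using deg by (simp add: e_def)
  show ?thesis
  proof (cases "e \<le> s")
    case True
    then have "degree (p * q) + e - s = 2 * k - 2 - s" "\<not> degree (p * q) < s - e"
      using deg_e assms(4) by auto
    then show ?thesis using True by (simp add: rev coeff_monom_mult coeff_reflect_poly)
  next
    case False
    then have "degree (p * q) < 2 * k - 2 - s" using deg_e by auto
    then show ?thesis using False by (simp add: rev coeff_monom_mult coeff_eq_0)
  qed
qed

definition poly_vec_reverse :: "nat \<Rightarrow> nat \<Rightarrow> (nat \<Rightarrow> 'a::zero poly) \<Rightarrow> nat \<Rightarrow> 'a poly" where
  "poly_vec_reverse n k x = restrict (\<lambda>l. poly_reverse k (x l)) {..<n}"

lemma bij_betw_poly_vec_reverse: "bij_betw (poly_vec_reverse n k) (poly_vecs n k) (poly_vecs n k)"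
proof -
  have "poly_vec_reverse n k x \<in> poly_vecs n k" for x :: "nat \<Rightarrow> 'a poly"
    by (simp add: poly_vec_reverse_def poly_vecs_def poly_reverse_in_polys_deg_less)
  moreover have "poly_vec_reverse n k (poly_vec_reverse n k x) = x" if "x \<in> poly_vecs n k" for x
    using that by (auto simp: poly_vec_reverse_def poly_vecs_def poly_reverse_poly_reverse PiE_iff
                              extensional_def fun_eq_iff)
  ultimately show ?thesis by (intro bij_betw_byWitness[where f'="poly_vec_reverse n k"]) auto
qed

lemma bij_betw_PiE_pairs:
  assumes "bij_betw (\<lambda>(y, z). g y z) (A \<times> B) C"
  shows "bij_betw (\<lambda>(y, z). restrict (\<lambda>l. g (y l) (z l)) I)
           (PiE I (\<lambda>_. A) \<times> PiE I (\<lambda>_. B)) (PiE I (\<lambda>_. C))"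
proof -
  define h where "h = the_inv_into (A \<times> B) (\<lambda>(y, z). g y z)"
  have h_g: "h (g y z) = (y, z)" if "y \<in> A" "z \<in> B" for y z
    using the_inv_into_f_f[OF bij_betw_imp_inj_on[OF assms], of "(y, z)"] that by (simp add: h_def)
  have h_in: "h c \<in> A \<times> B" if "c \<in> C" for c
    unfolding h_def using that bij_betw_imp_surj_on[OF assms]
    by (intro the_inv_into_into bij_betw_imp_inj_on[OF assms]) auto
  have g_h: "g (fst (h c)) (snd (h c)) = c" if "c \<in> C" for c
    using f_the_inv_into_f_bij_betw[OF assms that] by (simp add: h_def case_prod_beta)
  show ?thesis
  proof (rule bij_betw_byWitness
      [where f'="\<lambda>x. (restrict (\<lambda>l. fst (h (x l))) I, restrict (\<lambda>l. snd (h (x l))) I)"])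
    show "\<forall>yz\<in>PiE I (\<lambda>_. A) \<times> PiE I (\<lambda>_. B).
            (\<lambda>x. (restrict (\<lambda>l. fst (h (x l))) I, restrict (\<lambda>l. snd (h (x l))) I))
              ((\<lambda>(y, z). restrict (\<lambda>l. g (y l) (z l)) I) yz) = yz"
      by (auto simp: h_g PiE_iff extensional_def fun_eq_iff)
    show "\<forall>x\<in>PiE I (\<lambda>_. C). (\<lambda>(y, z). restrict (\<lambda>l. g (y l) (z l)) I)
            (restrict (\<lambda>l. fst (h (x l))) I, restrict (\<lambda>l. snd (h (x l))) I) = x"
      by (auto simp: g_h PiE_iff extensional_def fun_eq_iff)
    show "(\<lambda>(y, z). restrict (\<lambda>l. g (y l) (z l)) I) ` (PiE I (\<lambda>_. A) \<times> PiE I (\<lambda>_. B))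
            \<subseteq> PiE I (\<lambda>_. C)"
      using bij_betw_apply[OF assms] by (fastforce simp: PiE_iff)
    show "(\<lambda>x. (restrict (\<lambda>l. fst (h (x l))) I, restrict (\<lambda>l. snd (h (x l))) I))
            ` PiE I (\<lambda>_. C)
            \<subseteq> PiE I (\<lambda>_. A) \<times> PiE I (\<lambda>_. B)"
      using h_in by (fastforce simp: mem_Times_iff PiE_iff)
  qed
qed

lemma bij_betw_poly_split:
  assumes "j \<le> P"
  shows "bij_betw (\<lambda>(y, z). y + monom 1 j * z)
           (polys_deg_less j \<times> polys_deg_less (P - j)) (polys_deg_less P :: 'a::comm_semiring_1 poly set)"
proof (rule bij_betw_byWitness[where f'="\<lambda>x. (poly_cutoff j x, poly_shift j x)"])
  show "\<forall>yz\<in>polys_deg_less j \<times> (polys_deg_less (P - j) :: 'a poly set).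
          (\<lambda>x. (poly_cutoff j x, poly_shift j x)) ((\<lambda>(y, z). y + monom 1 j * z) yz) = yz"
    by (auto simp: polys_deg_less_def coeff_poly_cutoff coeff_poly_shift coeff_monom_mult intro!: poly_eqI)
  show "\<forall>x\<in>polys_deg_less P :: 'a poly set.
          (\<lambda>(y, z). y + monom 1 j * z) (poly_cutoff j x, poly_shift j x) = x"
    by (auto simp: coeff_poly_cutoff coeff_poly_shift coeff_monom_mult intro!: poly_eqI)
  show "(\<lambda>(y, z). y + monom 1 j * z) ` (polys_deg_less j \<times> polys_deg_less (P - j))
          \<subseteq> (polys_deg_less P :: 'a poly set)"
    using assms by (auto simp: polys_deg_less_def coeff_monom_mult)
  show "(\<lambda>x. (poly_cutoff j x, poly_shift j x)) ` (polys_deg_less P :: 'a poly set)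
          \<subseteq> polys_deg_less j \<times> polys_deg_less (P - j)"
    by (auto simp: polys_deg_less_def coeff_poly_cutoff coeff_poly_shift)
qed

lemma sum_poly_vecs_split:
  fixes h :: "(nat \<Rightarrow> 'a::{finite,comm_semiring_1} poly) \<Rightarrow> 'b::comm_semiring_1"
  assumes "j \<le> P"
    and "\<And>y z. y \<in> poly_vecs n j \<Longrightarrow> z \<in> poly_vecs n (P - j) \<Longrightarrow>
           h (restrict (\<lambda>l. y l + monom 1 j * z l) {..<n}) = h y"
  shows "(\<Sum>x\<in>poly_vecs n P. h x) = of_nat (CARD('a) ^ (n * (P - j))) * (\<Sum>y\<in>poly_vecs n j. h y)"
proof -
  have "bij_betw (\<lambda>(y, z). restrict (\<lambda>l. y l + monom 1 j * z l) {..<n})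
          (poly_vecs n j \<times> poly_vecs n (P - j)) (poly_vecs n P :: (nat \<Rightarrow> 'a poly) set)"
    unfolding poly_vecs_def by (rule bij_betw_PiE_pairs[OF bij_betw_poly_split[OF assms(1)]])
  then have "(\<Sum>x\<in>poly_vecs n P. h x) =
             (\<Sum>(y, z)\<in>poly_vecs n j \<times> poly_vecs n (P - j).
                h (restrict (\<lambda>l. y l + monom 1 j * z l) {..<n}))"
    by (subst sum.reindex_bij_betw[symmetric]) (auto simp: case_prod_unfold)
  also have "\<dots> = (\<Sum>y\<in>poly_vecs n j. \<Sum>z\<in>(poly_vecs n (P - j) :: (nat \<Rightarrow> 'a poly) set). h y)"
    unfolding sum.cartesian_product[symmetric] using assms(2) by (intro sum.cong) auto
  also have "\<dots> = of_nat (CARD('a) ^ (n * (P - j))) * (\<Sum>y\<in>poly_vecs n j. h y)"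
    by (simp add: card_poly_vecs sum_distrib_left)
  finally show ?thesis .
qed

section \<open>Absolute values, digits and the character\<close>

lemma qq_gt_1: "qq TYPE('a::{finite,field}) > 1"
proof -
  have "card {0::'a, 1} \<le> CARD('a)" by (rule card_mono) auto
  then show ?thesis by (simp add: qq_def)
qed

lemma fls_nth_poly_to_fls:
  "fls_nth (poly_to_fls (p::'a::{finite,field} poly)) k = (if k \<le> 0 then coeff p (nat (- k)) else 0)"
proof -
  have "fls_nth (poly_to_fls p) k = (\<Sum>j\<le>degree p. if j = nat (- k) \<and> k \<le> 0 then coeff p j else 0)"
    by (auto simp: poly_to_fls_def fls_nth_sum intro!: sum.cong)
  then show ?thesis by (auto simp: coeff_eq_0)
qed

lemma ls_abs_less_powr_iff:
  "ls_abs (\<alpha>::'a::{finite,field} fls) < qq TYPE('a) powr real_of_int e \<longleftrightarrow> (\<forall>k \<le> -e. fls_nth \<alpha> k = 0)"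
proof (cases "\<alpha> = 0")
  case True
  then show ?thesis using qq_gt_1[where 'a='a] by (simp add: ls_abs_def)
next
  case False
  then have "ls_abs \<alpha> < qq TYPE('a) powr real_of_int e \<longleftrightarrow> - fls_subdegree \<alpha> < e"
    using qq_gt_1[where 'a='a] by (simp add: ls_abs_def flip: of_int_minus)
  also have "\<dots> \<longleftrightarrow> (\<forall>k \<le> -e. fls_nth \<alpha> k = 0)"
  proof
    assume "\<forall>k \<le> -e. fls_nth \<alpha> k = 0"
    then have "\<not> fls_subdegree \<alpha> \<le> -e" using False by auto
    then show "- fls_subdegree \<alpha> < e" by simp
  qed auto
  finally show ?thesis .
qed

lemma poly_abs_less_power_iff:
  "poly_abs (b::'a::{finite,field} poly) < qq TYPE('a) ^ k \<longleftrightarrow> b \<in> polys_deg_less k"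
proof -
  have "poly_abs b < qq TYPE('a) ^ k \<longleftrightarrow> (\<forall>j \<le> - int k. fls_nth (poly_to_fls b) j = 0)"
    using ls_abs_less_powr_iff[of "poly_to_fls b" "int k"] qq_gt_1[where 'a='a]
    by (simp add: poly_abs_def powr_realpow)
  also have "\<dots> \<longleftrightarrow> (\<forall>i\<ge>k. coeff b i = 0)"
  proof safe
    fix i assume "\<forall>j \<le> - int k. fls_nth (poly_to_fls b) j = 0" "k \<le> i"
    then have "fls_nth (poly_to_fls b) (- int i) = 0" by auto
    then show "coeff b i = 0" by (simp add: fls_nth_poly_to_fls)
  qed (simp add: fls_nth_poly_to_fls)
  finally show ?thesis by (simp add: polys_deg_less_def)
qed

lemma pvecs_eq_poly_vecs: "pvecs n (qq TYPE('a) ^ k) = (poly_vecs n k :: (nat \<Rightarrow> 'a::{finite,field} poly) set)"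
  by (simp add: pvecs_def poly_vecs_def poly_abs_less_power_iff)

lemma poly_abs_eq_power_degree:
  assumes "(r::'a::{finite,field} poly) \<noteq> 0"
  shows "poly_abs r = qq TYPE('a) ^ degree r"
proof -
  have top: "fls_nth (poly_to_fls r) (- int (degree r)) \<noteq> 0"
    using assms by (simp add: fls_nth_poly_to_fls)
  then have nz: "poly_to_fls r \<noteq> 0" by auto
  have "fls_subdegree (poly_to_fls r) = - int (degree r)"
  proof (rule antisym)
    show "fls_subdegree (poly_to_fls r) \<le> - int (degree r)"
      using top by (rule fls_subdegree_leI)
    show "- int (degree r) \<le> fls_subdegree (poly_to_fls r)"
      by (rule fls_subdegree_geI[OF nz]) (auto simp: fls_nth_poly_to_fls coeff_eq_0)
  qed
  then show ?thesis using nz qq_gt_1[where 'a='a]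
    by (simp add: poly_abs_def ls_abs_def powr_realpow)
qed

lemma fls_nth_digits_to_fls:
  "fls_nth (digits_to_fls d) k = (if k \<ge> 1 then d (nat (k - 1)) else 0)"
  by (simp add: digits_to_fls_def fls_X_times_conv_shift)

lemma digits_abs_less_iff:
  "ls_abs (digits_to_fls (d::nat \<Rightarrow> 'a::{finite,field})) < 1 / qq TYPE('a) ^ k \<longleftrightarrow> (\<forall>i<k. d i = 0)"
proof -
  have "1 / qq TYPE('a) ^ k = qq TYPE('a) powr (- real k)"
    using qq_gt_1[where 'a='a] by (simp add: powr_minus_divide powr_realpow)
  then have "ls_abs (digits_to_fls d) < 1 / qq TYPE('a) ^ k \<longleftrightarrow>
             (\<forall>j \<le> int k. fls_nth (digits_to_fls d) j = 0)"
    using ls_abs_less_powr_iff[of "digits_to_fls d" "- int k"] by simp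
  also have "\<dots> \<longleftrightarrow> (\<forall>i<k. d i = 0)"
  proof safe
    fix i assume "\<forall>j \<le> int k. fls_nth (digits_to_fls d) j = 0" "i < k"
    then have "fls_nth (digits_to_fls d) (int i + 1) = 0" by auto
    then show "d i = 0" by (simp add: fls_nth_digits_to_fls)
  qed (auto simp: fls_nth_digits_to_fls)
  finally show ?thesis .
qed

lemma fls_nth_digits_mult_poly:
  fixes g :: "'a::{finite,field} poly"
  assumes "g \<in> polys_deg_less N"
  shows "fls_nth (digits_to_fls d * poly_to_fls g) 1 = (\<Sum>i<N. coeff g i * d i)"
proof -
  have "fls_nth (digits_to_fls d * (fls_const (coeff g j) * fls_X_inv ^ j)) 1 = coeff g j * d j" for j
    by (simp add: fls_X_inv_power_times_conv_shift(2) fls_nth_digits_to_fls mult.assoc[symmetric] mult.commute)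
  then have "fls_nth (digits_to_fls d * poly_to_fls g) 1 = (\<Sum>j\<le>degree g. coeff g j * d j)"
    by (simp add: poly_to_fls_def sum_distrib_left fls_nth_sum)
  also have "\<dots> = (\<Sum>i<N. coeff g i * d i)"
  proof (cases "g = 0")
    case False
    then have "degree g < N"
      using assms leading_coeff_0_iff not_le unfolding polys_deg_less_def by blast
    then show ?thesis
      by (intro sum.mono_neutral_left) (auto simp: coeff_eq_0)
  qed simp
  finally show ?thesis .
qed

lemma poly_to_fls_X_power: "poly_to_fls ([:0, 1:] ^ j :: 'a::{finite,field} poly) = fls_X_inv ^ j"
  by (rule fls_eqI) (auto simp: fls_nth_poly_to_fls monom_altdef[of 1, simplified, symmetric] coeff_monom)

lemma fls_nth_div_X_power:
  "fls_nth (poly_to_fls (g::'a::{finite,field} poly) / poly_to_fls ([:0, 1:] ^ j)) 1 =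
     (if 1 \<le> j then coeff g (j - 1) else 0)"
proof -
  have "poly_to_fls g / poly_to_fls ([:0, 1:] ^ j) = poly_to_fls g * fls_X ^ j"
    by (simp add: poly_to_fls_X_power divide_inverse power_inverse[symmetric] fls_inverse_X_inv)
  then show ?thesis
    by (auto simp: fls_X_power_times_conv_shift fls_nth_poly_to_fls nat_diff_distrib)
qed

lemma poly_abs_X_power: "poly_abs ([:0, 1:] ^ j :: 'a::{finite,field} poly) = qq TYPE('a) ^ j"
  by (simp add: poly_abs_eq_power_degree degree_power_eq)

definition psi_const :: "'a::{finite,field} \<Rightarrow> complex" where
  "psi_const c = psi (fls_const c * fls_X)"

lemma psi_eq_psi_const: "psi \<alpha> = psi_const (fls_nth \<alpha> 1)"
  by (simp add: psi_const_def psi_def fls_X_times_conv_shift)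

lemma psi_const_0: "psi_const (0::'a::{finite,field}) = 1"
proof -
  have p: "CHAR('a) > 0" by (simp add: finite_imp_CHAR_pos)
  have "ftrace (0::'a) = 0" using p by (simp add: ftrace_def zero_power)
  then have "ftrace_nat (0::'a) = 0"
    unfolding ftrace_nat_def using p
    by (auto intro!: the_equality simp: of_nat_eq_0_iff_char_dvd dest: nat_dvd_not_less)
  then show ?thesis by (simp add: psi_const_def psi_def)
qed

section \<open>Integration over the unit ball\<close>

lemma PiM_uniform_count_measure_UNIV:
  assumes "finite I"
  shows "PiM I (\<lambda>_. uniform_count_measure (UNIV :: 'a::finite set)) =
         uniform_count_measure (PiE I (\<lambda>_. UNIV :: 'a set))"
    (is "?M = ?U")
proof (rule measure_eqI_finite)
  interpret product_prob_space "\<lambda>_. uniform_count_measure (UNIV :: 'a set)" I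
    by (intro product_prob_spaceI prob_space_uniform_count_measure) simp_all
  have "sets ?M = sets (PiM I (\<lambda>_. count_space (UNIV :: 'a set)))"
    by (rule sets_PiM_cong) (simp_all add: sets_uniform_count_measure)
  then show "sets ?M = Pow (PiE I (\<lambda>_. UNIV))"
    using count_space_PiM_finite[OF assms, of "\<lambda>_. UNIV :: 'a set"] by simp
  show "sets ?U = Pow (PiE I (\<lambda>_. UNIV))"
    by (simp add: sets_uniform_count_measure)
  show "finite (PiE I (\<lambda>_. UNIV :: 'a set))" using assms by (simp add: finite_PiE)
  fix v assume v: "v \<in> PiE I (\<lambda>_. UNIV :: 'a set)"
  have "{v} = PiE I (\<lambda>i. {v i})" using v by (intro PiE_singleton[symmetric]) (auto simp: PiE_def)
  then have "emeasure ?M {v} = (\<Prod>i\<in>I. ennreal (1 / CARD('a)))"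
    using assms by (simp add: emeasure_PiM emeasure_uniform_count_measure)
  also have "\<dots> = emeasure ?U {v}"
    using v assms by (simp add: emeasure_uniform_count_measure card_PiE finite_PiE ennreal_power power_one_over)
  finally show "emeasure ?M {v} = emeasure ?U {v}" .
qed

lemma integral_haarT_restrict:
  fixes H :: "(nat \<Rightarrow> 'a::{finite,field}) \<Rightarrow> complex"
  shows "integral\<^sup>L haarT (\<lambda>d. H (restrict d {..<N})) =
         (\<Sum>v\<in>PiE {..<N} (\<lambda>_. UNIV). H v) / of_real (qq TYPE('a) ^ N)"
proof -
  define M where "M = (\<lambda>_::nat. uniform_count_measure (UNIV :: 'a set))"
  interpret product_prob_space M UNIV
    unfolding M_def by (intro product_prob_spaceI prob_space_uniform_count_measure) simp_all
  have PiM_eq: "PiM {..<N} M = uniform_count_measure (PiE {..<N} (\<lambda>_. UNIV))"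
    unfolding M_def by (simp add: PiM_uniform_count_measure_UNIV)
  have "integral\<^sup>L haarT (\<lambda>d. H (restrict d {..<N})) =
        integral\<^sup>L (distr (PiM UNIV M) (PiM {..<N} M) (\<lambda>d. restrict d {..<N})) H"
    unfolding haarT_def M_def[symmetric]
  proof (rule integral_distr[symmetric])
    show "(\<lambda>d. restrict d {..<N}) \<in> PiM UNIV M \<rightarrow>\<^sub>M PiM {..<N} M"
      by (rule measurable_restrict_subset) simp
    show "H \<in> borel_measurable (PiM {..<N} M)"
      unfolding PiM_eq by (simp add: measurable_cong_sets[OF sets_uniform_count_measure_count_space refl])
  qed
  also have "\<dots> = integral\<^sup>L (uniform_count_measure (PiE {..<N} (\<lambda>_. UNIV))) H"
    by (subst distr_PiM_restrict_finite) (simp_all add: PiM_eq)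
  also have "\<dots> = (\<Sum>v\<in>PiE {..<N} (\<lambda>_. UNIV). H v) / of_real (qq TYPE('a) ^ N)"
    by (simp add: uniform_count_measure_def lebesgue_integral_point_measure_finite finite_PiE
        card_PiE qq_def scaleR_conv_of_real sum_divide_distrib)
  finally show ?thesis .
qed

section \<open>The quadratic form\<close>

lemma fquad_in_polys_deg_less:
  assumes "x \<in> poly_vecs n P"
  shows "fquad a n x \<in> polys_deg_less (2 * P - 1)"
proof -
  have "x l ^ 2 \<in> polys_deg_less (2 * P - 1)" if "l < n" for l
    using mult_in_polys_deg_less[of "x l" P "x l" P] assms that
    by (auto simp: poly_vecs_def power2_eq_square mult_2 PiE_iff)
  then show ?thesis by (simp add: fquad_def polys_deg_less_def coeff_sum)
qed

lemma coeff_fquad_poly_vec_reverse: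
  assumes "x \<in> poly_vecs n k" "1 \<le> k" "s \<le> 2 * k - 2"
  shows "coeff (fquad a n (poly_vec_reverse n k x)) s = coeff (fquad a n x) (2 * k - 2 - s)"
proof -
  have "coeff (poly_reverse k (x l) * poly_reverse k (x l)) s = coeff (x l * x l) (2 * k - 2 - s)"
    if "l < n" for l
    using assms that by (intro coeff_poly_reverse_mult) (auto simp: poly_vecs_def)
  then show ?thesis
    by (auto simp: fquad_def coeff_sum poly_vec_reverse_def power2_eq_square intro!: sum.cong)
qed

lemma coeff_fquad_add_monom_mult:
  assumes "i < j"
  shows "coeff (fquad a n (restrict (\<lambda>l. y l + monom 1 j * z l) {..<n})) i = coeff (fquad a n y) i"
proof -
  have "(p + monom 1 j * w) ^ 2 = p ^ 2 + monom 1 j * (w * (2 * p + monom 1 j * w))" for p w :: "'a poly"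
    by (simp add: algebra_simps power2_eq_square)
  then show ?thesis
    using assms by (simp add: fquad_def coeff_sum coeff_monom_mult)
qed

lemma sum_top_coeffs_fquad:
  fixes a :: "nat \<Rightarrow> 'a::{finite,field}" and G :: "'a \<Rightarrow> 'b::comm_monoid_add"
  assumes "1 \<le> j" "j \<le> P"
  shows "(\<Sum>x\<in>poly_vecs n P. G (\<Sum>w<j. coeff (fquad a n x) (2 * P - 1 - j + w) * coeff c w)) =
         (\<Sum>x\<in>poly_vecs n P. G (coeff (c * fquad a n x) (j - 1)))"
proof -
  txt \<open>Reversing the coordinates of x turns the top j coefficients of f(x) into the bottom ones.\<close>
  have "(\<Sum>x\<in>poly_vecs n P. G (\<Sum>w<j. coeff (fquad a n x) (2 * P - 1 - j + w) * coeff c w)) =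
        (\<Sum>x\<in>poly_vecs n P. G (\<Sum>w<j. coeff (fquad a n (poly_vec_reverse n P x)) (2 * P - 1 - j + w) * coeff c w))"
    by (rule sum.reindex_bij_betw[OF bij_betw_poly_vec_reverse, symmetric])
  also have "\<dots> = (\<Sum>x\<in>poly_vecs n P. G (coeff (c * fquad a n x) (j - 1)))"
  proof (rule sum.cong[OF refl])
    fix x :: "nat \<Rightarrow> 'a poly" assume x: "x \<in> poly_vecs n P"
    have "coeff (fquad a n (poly_vec_reverse n P x)) (2 * P - 1 - j + w) = coeff (fquad a n x) (j - 1 - w)"
      if "w < j" for w
    proof -
      have idx: "1 \<le> P" "2 * P - 1 - j + w \<le> 2 * P - 2" "2 * P - 2 - (2 * P - 1 - j + w) = j - 1 - w"
        using that assms by auto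
      from coeff_fquad_poly_vec_reverse[OF x idx(1,2)] show ?thesis unfolding idx(3) .
    qed
    moreover have "coeff (c * g) (j - 1) = (\<Sum>w<j. coeff g (j - 1 - w) * coeff c w)" for g
    proof -
      have "{..j - 1} = {..<j}" using assms(1) by auto
      then show ?thesis by (simp add: coeff_mult mult.commute)
    qed
    ultimately show "G (\<Sum>w<j. coeff (fquad a n (poly_vec_reverse n P x)) (2 * P - 1 - j + w) * coeff c w) =
                     G (coeff (c * fquad a n x) (j - 1))"
      by simp
  qed
  finally show ?thesis .
qed

lemma sum_coeff_mult_fquad_truncate:
  fixes a :: "nat \<Rightarrow> 'a::{finite,field}" and G :: "'a \<Rightarrow> 'b::comm_semiring_1"
  assumes "1 \<le> j" "j \<le> P"
  shows "(\<Sum>x\<in>poly_vecs n P. G (coeff (c * fquad a n x) (j - 1))) =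
         of_nat (CARD('a) ^ (n * (P - j))) * (\<Sum>y\<in>poly_vecs n j. G (coeff (c * fquad a n y) (j - 1)))"
proof (rule sum_poly_vecs_split[OF assms(2)])
  fix y z :: "nat \<Rightarrow> 'a poly"
  have "coeff (c * fquad a n (restrict (\<lambda>l. y l + monom 1 j * z l) {..<n})) (j - 1) =
        coeff (c * fquad a n y) (j - 1)"
    unfolding coeff_mult using assms(1) by (intro sum.cong refl) (simp add: coeff_fquad_add_monom_mult)
  then show "G (coeff (c * fquad a n (restrict (\<lambda>l. y l + monom 1 j * z l) {..<n})) (j - 1)) =
             G (coeff (c * fquad a n y) (j - 1))"
    by simp
qed

section \<open>Complete exponential sums modulo powers of t\<close>

lemma is_unit_if_dvd_X_power:
  fixes d :: "'a::field poly"
  assumes "d dvd [:0, 1:] ^ j" "poly d 0 \<noteq> 0"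
  shows "is_unit d"
  using assms(1)
proof (induction j)
  case (Suc j)
  from Suc.prems obtain e where e: "[:0, 1:] ^ Suc j = d * e" by (elim dvdE)
  then have "poly d 0 * poly e 0 = 0"
    by (metis poly_mult poly_power poly_pCons power_Suc mult_zero_left add_0 poly_0 mult_zero_right)
  then have "[:0, 1:] dvd e" using assms(2) dvd_iff_poly_eq_0[of 0 e] by simp
  then obtain e' where "e = [:0, 1:] * e'" by (elim dvdE)
  with e have "[:0, 1:] ^ j = d * e'" by (simp add: ac_simps)
  then show ?case by (intro Suc.IH) simp
qed simp

lemma coprime_X_power_iff:
  fixes c :: "'a::field poly"
  assumes "1 \<le> j"
  shows "coprime c ([:0, 1:] ^ j) \<longleftrightarrow> coeff c 0 \<noteq> 0"
proof
  assume "coprime c ([:0, 1:] ^ j)"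
  moreover have "[:0, 1:] dvd ([:0, 1:] ^ j :: 'a poly)" using assms by (simp add: dvd_power)
  moreover have "\<not> is_unit ([:0, 1:] :: 'a poly)" by (simp add: is_unit_iff_degree)
  ultimately have "\<not> [:0, 1:] dvd c" using coprime_common_divisor by blast
  then show "coeff c 0 \<noteq> 0" using dvd_iff_poly_eq_0[of 0 c] by (simp add: poly_0_coeff_0)
next
  assume "coeff c 0 \<noteq> 0"
  show "coprime c ([:0, 1:] ^ j)"
  proof (rule coprimeI)
    fix d assume "d dvd c" "d dvd [:0, 1:] ^ j"
    moreover from \<open>d dvd c\<close> \<open>coeff c 0 \<noteq> 0\<close> have "poly d 0 \<noteq> 0"
      by (auto simp: poly_0_coeff_0[symmetric] elim: dvdE)
    ultimately show "is_unit d" by (intro is_unit_if_dvd_X_power)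
  qed
qed

definition units_mod_X_power :: "nat \<Rightarrow> 'a::zero poly set" where
  "units_mod_X_power j = {c \<in> polys_deg_less j. coeff c 0 \<noteq> 0}"

lemma Sar_X_power:
  assumes "1 \<le> j"
  shows "Sar a n c ([:0, 1:] ^ j) = (\<Sum>y\<in>poly_vecs n j. psi_const (coeff (c * fquad a n y) (j - 1)))"
  unfolding Sar_def poly_abs_X_power pvecs_eq_poly_vecs psi_eq_psi_const fls_nth_div_X_power
  using assms by simp

lemma Sr_X_power:
  assumes "1 \<le> j"
  shows "Sr a n ([:0, 1:] ^ j) = (\<Sum>c\<in>units_mod_X_power j. Sar a n c ([:0, 1:] ^ j))"
proof -
  have "{c :: 'a poly. poly_abs c < poly_abs ([:0, 1:] ^ j :: 'a poly) \<and> coprime c ([:0, 1:] ^ j)} =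
        units_mod_X_power j"
    by (auto simp: poly_abs_X_power poly_abs_less_power_iff coprime_X_power_iff[OF assms] units_mod_X_power_def)
  then show ?thesis by (simp add: Sr_def)
qed

lemma Sr_1: "Sr a n (1 :: 'a::{finite,field} poly) = 1"
proof -
  have "{c :: 'a poly. poly_abs c < poly_abs (1 :: 'a poly) \<and> coprime c 1} = {0 :: 'a poly}"
    using poly_abs_less_power_iff[where 'a='a and k=0] poly_abs_eq_power_degree[of "1 :: 'a poly"]
    by (auto simp: polys_deg_less_def poly_eq_iff)
  then show ?thesis
    using poly_abs_eq_power_degree[of "1 :: 'a poly"] card_poly_vecs[of n 0, where 'a='a]
    by (simp add: Sr_def Sar_def pvecs_eq_poly_vecs[of n 0, simplified] psi_eq_psi_const psi_const_0
                  poly_to_fls_def)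
qed

section \<open>The integral as a sum over digit vectors\<close>

text \<open>S_digits a n P N v is S(theta) for the theta whose digits are v, i.e. theta = sum v_i t^-(i+1),
  as long as 2P - 1 <= N.\<close>

definition S_digits ::
    "(nat \<Rightarrow> 'a::{finite,field}) \<Rightarrow> nat \<Rightarrow> nat \<Rightarrow> nat \<Rightarrow> (nat \<Rightarrow> 'a) \<Rightarrow> complex" where
  "S_digits a n P N v = (\<Sum>x\<in>poly_vecs n P. psi_const (\<Sum>i<N. coeff (fquad a n x) i * v i))"

lemma Ssum_digits_to_fls:
  assumes "2 * P - 1 \<le> N"
  shows "Ssum a n P (digits_to_fls d) = S_digits a n P N (restrict d {..<N})"
proof -
  have "psi (digits_to_fls d * poly_to_fls (fquad a n x)) =
        psi_const (\<Sum>i<N. coeff (fquad a n x) i * restrict d {..<N} i)" if "x \<in> poly_vecs n P" for x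
    using fls_nth_digits_mult_poly[OF subsetD[OF polys_deg_less_mono[OF assms] fquad_in_polys_deg_less[OF that]]]
    by (simp add: psi_eq_psi_const)
  then show ?thesis by (simp add: Ssum_def S_digits_def pvecs_eq_poly_vecs)
qed

lemma S_digits_zero:
  fixes a :: "nat \<Rightarrow> 'a::{finite,field}"
  assumes "\<forall>i<N. v i = 0"
  shows "S_digits a n P N v = of_nat (CARD('a) ^ (n * P))"
  using assms by (simp add: S_digits_def psi_const_0 card_poly_vecs)

definition prefix_zero_vecs :: "nat \<Rightarrow> nat \<Rightarrow> (nat \<Rightarrow> 'a::zero) set" where
  "prefix_zero_vecs N m = {v \<in> PiE {..<N} (\<lambda>_. UNIV). \<forall>i<m. v i = 0}"

lemma Ir_eq_sum_prefix_zero_vecs: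
  fixes a :: "nat \<Rightarrow> 'a::{finite,field}" and r :: "'a poly"
  assumes "r \<noteq> 0" "P + degree r \<le> N" "2 * P - 1 \<le> N"
  shows "Ir a n P r =
           (\<Sum>v\<in>prefix_zero_vecs N (P + degree r). S_digits a n P N v) / of_real (qq TYPE('a) ^ N)"
proof -
  define H where "H v = (if \<forall>i<P + degree r. v i = 0 then S_digits a n P N v else 0)" for v
  have "1 / (poly_abs r * qq TYPE('a) ^ P) = 1 / qq TYPE('a) ^ (P + degree r)"
    by (simp add: poly_abs_eq_power_degree[OF assms(1)] power_add)
  then have "indicator {d. ls_abs (digits_to_fls d) < 1 / (poly_abs r * qq TYPE('a) ^ P)} d *\<^sub>R
               Ssum a n P (digits_to_fls d) = H (restrict d {..<N})" for d :: "nat \<Rightarrow> 'a"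
    using assms(2) by (auto simp: H_def digits_abs_less_iff Ssum_digits_to_fls[OF assms(3)])
  then have "Ir a n P r = integral\<^sup>L haarT (\<lambda>d. H (restrict d {..<N}))"
    by (simp add: Ir_def set_lebesgue_integral_def)
  also have "\<dots> = (\<Sum>v\<in>PiE {..<N} (\<lambda>_. UNIV). H v) / of_real (qq TYPE('a) ^ N)"
    by (rule integral_haarT_restrict)
  also have "(\<Sum>v\<in>PiE {..<N} (\<lambda>_. UNIV). H v) = (\<Sum>v\<in>prefix_zero_vecs N (P + degree r). S_digits a n P N v)"
    unfolding H_def prefix_zero_vecs_def by (rule sum.inter_filter[symmetric]) (simp add: finite_PiE)
  finally show ?thesis .
qed

text \<open>The digit vectors of the theta with |theta| = q^-(i+1).\<close>

definition first_nonzero_vecs :: "nat \<Rightarrow> nat \<Rightarrow> (nat \<Rightarrow> 'a::zero) set" where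
  "first_nonzero_vecs N i = {v \<in> PiE {..<N} (\<lambda>_. UNIV). (\<forall>k<i. v k = 0) \<and> v i \<noteq> 0}"

lemma sum_prefix_zero_vecs:
  fixes G :: "(nat \<Rightarrow> 'a::{finite,zero}) \<Rightarrow> 'b::comm_monoid_add"
  assumes "m \<le> N"
  shows "(\<Sum>v\<in>prefix_zero_vecs N m. G v) =
           G (restrict (\<lambda>_. 0) {..<N}) + (\<Sum>i\<in>{m..<N}. \<Sum>v\<in>first_nonzero_vecs N i. G v)"
  using assms
proof (induction m rule: inc_induct)
  case base
  have "prefix_zero_vecs N N = {restrict (\<lambda>_. 0 :: 'a) {..<N}}"
    by (auto simp: prefix_zero_vecs_def PiE_iff extensional_def restrict_def)
  then show ?case by simp
next
  case (step m)
  have "prefix_zero_vecs N m = prefix_zero_vecs N (Suc m) \<union> first_nonzero_vecs N m"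
    "prefix_zero_vecs N (Suc m) \<inter> first_nonzero_vecs N m = {}"
    using step.hyps by (auto simp: prefix_zero_vecs_def first_nonzero_vecs_def less_Suc_eq)
  moreover have "finite (prefix_zero_vecs N k :: (nat \<Rightarrow> 'a) set)"
    "finite (first_nonzero_vecs N k :: (nat \<Rightarrow> 'a) set)" for k
    by (auto simp: prefix_zero_vecs_def first_nonzero_vecs_def finite_PiE)
  ultimately have "(\<Sum>v\<in>prefix_zero_vecs N m. G v) =
                   (\<Sum>v\<in>prefix_zero_vecs N (Suc m). G v) + (\<Sum>v\<in>first_nonzero_vecs N m. G v)"
    by (metis sum.union_disjoint)
  then show ?case
    using step.IH step.hyps by (simp add: sum.atLeast_Suc_lessThan ac_simps)
qed

definition shell_vec :: "nat \<Rightarrow> nat \<Rightarrow> 'a::zero poly \<Rightarrow> nat \<Rightarrow> 'a" where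
  "shell_vec N i c = restrict (\<lambda>k. if i \<le> k then coeff c (k - i) else 0) {..<N}"

lemma shell_vec_in_first_nonzero_vecs:
  assumes "i < N" "c \<in> units_mod_X_power (N - i)"
  shows "shell_vec N i c \<in> first_nonzero_vecs N i"
proof -
  have "shell_vec N i c k = 0" if "k < i" for k
    using assms that by (simp add: shell_vec_def)
  moreover have "shell_vec N i c i = coeff c 0"
    using assms by (simp add: shell_vec_def)
  moreover have "shell_vec N i c \<in> PiE {..<N} (\<lambda>_. UNIV)"
    by (simp add: shell_vec_def)
  ultimately show ?thesis
    using assms by (simp add: first_nonzero_vecs_def units_mod_X_power_def)
qed

lemma bij_betw_shell_vec:
  assumes "i < N"
  shows "bij_betw (shell_vec N i) (units_mod_X_power (N - i) :: 'a::zero poly set) (first_nonzero_vecs N i)"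
proof (rule bij_betw_byWitness[where f'="\<lambda>v. poly_of_coeffs (N - i) (\<lambda>w. v (i + w))"])
  show "\<forall>c\<in>units_mod_X_power (N - i). poly_of_coeffs (N - i) (\<lambda>w. shell_vec N i c (i + w)) = c"
    by (auto simp: units_mod_X_power_def polys_deg_less_def shell_vec_def coeff_poly_of_coeffs poly_eq_iff)
  show "\<forall>v\<in>first_nonzero_vecs N i. shell_vec N i (poly_of_coeffs (N - i) (\<lambda>w. v (i + w))) = v"
  proof (intro ballI ext)
    fix v k assume "v \<in> first_nonzero_vecs N i"
    then have v: "v \<in> PiE {..<N} (\<lambda>_. UNIV)" "\<And>k. k < i \<Longrightarrow> v k = 0"
      by (auto simp: first_nonzero_vecs_def)
    consider "k < N" "i \<le> k" | "k < i" | "\<not> k < N" by linarith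
    then show "shell_vec N i (poly_of_coeffs (N - i) (\<lambda>w. v (i + w))) k = v k"
    proof cases
      case 1
      then have "k - i < N - i" "i + (k - i) = k" by auto
      with 1 show ?thesis by (simp add: shell_vec_def coeff_poly_of_coeffs)
    next
      case 2
      with assms have "shell_vec N i (poly_of_coeffs (N - i) (\<lambda>w. v (i + w))) k = 0"
        by (simp add: shell_vec_def)
      with v(2)[OF 2] show ?thesis by simp
    next
      case 3
      with PiE_arb[OF v(1), of k] show ?thesis by (simp add: shell_vec_def)
    qed
  qed
  show "shell_vec N i ` units_mod_X_power (N - i) \<subseteq> first_nonzero_vecs N i"
    using shell_vec_in_first_nonzero_vecs[OF assms] by blast
  show "(\<lambda>v. poly_of_coeffs (N - i) (\<lambda>w. v (i + w))) ` first_nonzero_vecs N i \<subseteq> units_mod_X_power (N - i)"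
    using assms by (auto simp: units_mod_X_power_def first_nonzero_vecs_def coeff_poly_of_coeffs
                               poly_of_coeffs_in_polys_deg_less)
qed

lemma sum_mult_shell_vec:
  fixes g :: "nat \<Rightarrow> 'a::comm_semiring_0"
  assumes "i \<le> N"
  shows "(\<Sum>k<N. g k * shell_vec N i c k) = (\<Sum>w<N - i. g (i + w) * coeff c w)"
proof -
  have "(\<Sum>k<N. g k * shell_vec N i c k) = (\<Sum>k\<in>{i..<N}. g k * coeff c (k - i))"
  proof (rule sum.mono_neutral_cong_right)
    show "\<forall>k\<in>{..<N} - {i..<N}. g k * shell_vec N i c k = 0"
      by (auto simp: shell_vec_def)
    show "g k * shell_vec N i c k = g k * coeff c (k - i)" if "k \<in> {i..<N}" for k
      using that by (simp add: shell_vec_def)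
  qed auto
  also have "\<dots> = (\<Sum>w<N - i. g (i + w) * coeff c w)"
    by (simp add: sum.atLeastLessThan_shift_0 atLeast0LessThan add.commute)
  finally show ?thesis .
qed

lemma S_digits_shell_vec:
  fixes a :: "nat \<Rightarrow> 'a::{finite,field}"
  assumes "1 \<le> j" "j \<le> P"
  shows "S_digits a n P (2 * P - 1) (shell_vec (2 * P - 1) (2 * P - 1 - j) c) =
           of_nat (CARD('a) ^ (n * (P - j))) * Sar a n c ([:0, 1:] ^ j)"
proof -
  have "S_digits a n P (2 * P - 1) (shell_vec (2 * P - 1) (2 * P - 1 - j) c) =
        (\<Sum>x\<in>poly_vecs n P. psi_const (\<Sum>w<j. coeff (fquad a n x) (2 * P - 1 - j + w) * coeff c w))"
    using assms by (simp add: S_digits_def sum_mult_shell_vec)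
  also have "\<dots> = (\<Sum>x\<in>poly_vecs n P. psi_const (coeff (c * fquad a n x) (j - 1)))"
    by (rule sum_top_coeffs_fquad[OF assms])
  also have "\<dots> = of_nat (CARD('a) ^ (n * (P - j))) *
                   (\<Sum>y\<in>poly_vecs n j. psi_const (coeff (c * fquad a n y) (j - 1)))"
    by (rule sum_coeff_mult_fquad_truncate[OF assms])
  also have "\<dots> = of_nat (CARD('a) ^ (n * (P - j))) * Sar a n c ([:0, 1:] ^ j)"
    by (simp add: Sar_X_power[OF assms(1)])
  finally show ?thesis .
qed

lemma sum_first_nonzero_vecs_S_digits:
  fixes a :: "nat \<Rightarrow> 'a::{finite,field}"
  assumes "P \<le> i + 1" "i < 2 * P - 1"
  shows "(\<Sum>v\<in>first_nonzero_vecs (2 * P - 1) i. S_digits a n P (2 * P - 1) v) =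
           of_nat (CARD('a) ^ (n * (P - (2 * P - 1 - i)))) * Sr a n ([:0, 1:] ^ (2 * P - 1 - i))"
proof -
  define j where "j = 2 * P - 1 - i"
  have j: "1 \<le> j" "j \<le> P" "i = 2 * P - 1 - j" using assms by (auto simp: j_def)
  have "bij_betw (shell_vec (2 * P - 1) i) (units_mod_X_power j)
          (first_nonzero_vecs (2 * P - 1) i :: (nat \<Rightarrow> 'a) set)"
    using bij_betw_shell_vec[OF assms(2)] by (simp add: j_def)
  then have "(\<Sum>v\<in>first_nonzero_vecs (2 * P - 1) i. S_digits a n P (2 * P - 1) v) =
        (\<Sum>c\<in>units_mod_X_power j. S_digits a n P (2 * P - 1) (shell_vec (2 * P - 1) i c))"
    by (rule sum.reindex_bij_betw[symmetric])
  also have "\<dots> = (\<Sum>c\<in>units_mod_X_power j. of_nat (CARD('a) ^ (n * (P - j))) * Sar a n c ([:0, 1:] ^ j))"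
    unfolding j(3) using j(1,2) by (intro sum.cong refl S_digits_shell_vec)
  also have "\<dots> = of_nat (CARD('a) ^ (n * (P - j))) * Sr a n ([:0, 1:] ^ j)"
    by (simp add: Sr_X_power[OF j(1)] sum_distrib_left)
  finally show ?thesis by (simp add: j_def)
qed

lemma sum_prefix_zero_vecs_S_digits:
  fixes a :: "nat \<Rightarrow> 'a::{finite,field}"
  assumes "P \<le> m + 1" "m \<le> 2 * P - 1"
  shows "(\<Sum>v\<in>prefix_zero_vecs (2 * P - 1) m. S_digits a n P (2 * P - 1) v) =
           (\<Sum>i = m..2 * P - 1.
              of_nat (CARD('a) ^ (n * (P - (2 * P - 1 - i)))) * Sr a n ([:0, 1:] ^ (2 * P - 1 - i)))"
proof -
  define N where "N = 2 * P - 1"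
  have "(\<Sum>v\<in>prefix_zero_vecs N m. S_digits a n P N v) =
        S_digits a n P N (restrict (\<lambda>_. 0) {..<N}) +
          (\<Sum>i\<in>{m..<N}. \<Sum>v\<in>first_nonzero_vecs N i. S_digits a n P N v)"
    using assms(2) unfolding N_def by (rule sum_prefix_zero_vecs)
  also have "S_digits a n P N (restrict (\<lambda>_. 0) {..<N}) =
             of_nat (CARD('a) ^ (n * (P - (N - N)))) * Sr a n ([:0, 1:] ^ (N - N))"
    by (simp add: S_digits_zero Sr_1)
  also have "(\<Sum>i\<in>{m..<N}. \<Sum>v\<in>first_nonzero_vecs N i. S_digits a n P N v) =
             (\<Sum>i\<in>{m..<N}. of_nat (CARD('a) ^ (n * (P - (N - i)))) * Sr a n ([:0, 1:] ^ (N - i)))"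
    using assms unfolding N_def by (intro sum.cong refl sum_first_nonzero_vecs_S_digits) auto
  finally show ?thesis
    using assms(2) by (simp add: sum.last_plus N_def)
qed

lemma sum_shells_rescale:
  fixes F :: "nat \<Rightarrow> complex"
  assumes "\<rho> < P"
  shows "(\<Sum>i = P + \<rho>..2 * P - 1. of_nat (CARD('a) ^ (n * (P - (2 * P - 1 - i)))) * F (2 * P - 1 - i)) /
           of_real (qq TYPE('a::{finite,field}) ^ (2 * P - 1)) =
         of_real ((qq TYPE('a) ^ \<rho>) ^ n * qq TYPE('a) ^ (n + 1) / qq TYPE('a) ^ (2 * P)) *
           (\<Sum>k = 0..P - \<rho> - 1. of_real (qq TYPE('a) ^ (n * k)) * F (P - \<rho> - k - 1))"
proof -
  define q where "q = qq TYPE('a)"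
  have q: "q > 0" using qq_gt_1[where 'a='a] by (simp add: q_def)
  have scale: "q ^ (n * (\<rho> + 1 + k)) / q ^ (2 * P - 1) = (q ^ \<rho>) ^ n * q ^ (n + 1) / q ^ (2 * P) * q ^ (n * k)"
    for k
  proof -
    have "q ^ (2 * P) = q * q ^ (2 * P - 1)"
      using assms by (simp flip: power_Suc)
    then show ?thesis
      using q by (simp add: power_add power_mult[symmetric] field_simps)
  qed
  have bounds: "{P + \<rho>..2 * P - 1} = {0 + (P + \<rho>)..(P - \<rho> - 1) + (P + \<rho>)}"
    using assms by auto
  have "(\<Sum>i = P + \<rho>..2 * P - 1. of_nat (CARD('a) ^ (n * (P - (2 * P - 1 - i)))) * F (2 * P - 1 - i)) =
        (\<Sum>k = 0..P - \<rho> - 1. of_nat (CARD('a) ^ (n * (P - (2 * P - 1 - (k + (P + \<rho>)))))) *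
                                 F (2 * P - 1 - (k + (P + \<rho>))))"
    unfolding bounds sum.shift_bounds_cl_nat_ivl ..
  also have "\<dots> = (\<Sum>k = 0..P - \<rho> - 1. of_real (q ^ (n * (\<rho> + 1 + k))) * F (P - \<rho> - k - 1))"
  proof (rule sum.cong[OF refl])
    fix k assume "k \<in> {0..P - \<rho> - 1}"
    then have "2 * P - 1 - (k + (P + \<rho>)) = P - \<rho> - k - 1" "P - (P - \<rho> - k - 1) = \<rho> + 1 + k"
      using assms by auto
    then show "of_nat (CARD('a) ^ (n * (P - (2 * P - 1 - (k + (P + \<rho>)))))) * F (2 * P - 1 - (k + (P + \<rho>))) =
               of_real (q ^ (n * (\<rho> + 1 + k))) * F (P - \<rho> - k - 1)"
      by (simp add: q_def qq_def)
  qed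
  finally have "(\<Sum>i = P + \<rho>..2 * P - 1. of_nat (CARD('a) ^ (n * (P - (2 * P - 1 - i)))) * F (2 * P - 1 - i)) /
                  of_real (q ^ (2 * P - 1)) =
                (\<Sum>k = 0..P - \<rho> - 1. of_real (q ^ (n * (\<rho> + 1 + k)) / q ^ (2 * P - 1)) * F (P - \<rho> - k - 1))"
    by (simp add: sum_divide_distrib)
  also have "\<dots> = of_real ((q ^ \<rho>) ^ n * q ^ (n + 1) / q ^ (2 * P)) *
                   (\<Sum>k = 0..P - \<rho> - 1. of_real (q ^ (n * k)) * F (P - \<rho> - k - 1))"
    unfolding scale by (simp add: sum_distrib_left mult.assoc)
  finally show ?thesis by (simp only: q_def)
qed

lemma Ir_degree_less:
  fixes a :: "nat \<Rightarrow> 'a::{finite,field}" and r :: "'a poly"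
  assumes "r \<noteq> 0" "degree r < P"
  shows "Ir a n P r =
           of_real (poly_abs r ^ n * qq TYPE('a) ^ (n + 1) / qq TYPE('a) ^ (2 * P)) *
           (\<Sum>k = 0..P - degree r - 1. of_real (qq TYPE('a) ^ (n * k)) * Sr a n ([:0, 1:] ^ (P - degree r - k - 1)))"
proof -
  have "Ir a n P r = (\<Sum>v\<in>prefix_zero_vecs (2 * P - 1) (P + degree r). S_digits a n P (2 * P - 1) v) /
                     of_real (qq TYPE('a) ^ (2 * P - 1))"
    using assms by (intro Ir_eq_sum_prefix_zero_vecs) auto
  also have "\<dots> = (\<Sum>i = P + degree r..2 * P - 1. of_nat (CARD('a) ^ (n * (P - (2 * P - 1 - i)))) *
                     Sr a n ([:0, 1:] ^ (2 * P - 1 - i))) / of_real (qq TYPE('a) ^ (2 * P - 1))"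
    using assms by (subst sum_prefix_zero_vecs_S_digits) auto
  also have "\<dots> = of_real (poly_abs r ^ n * qq TYPE('a) ^ (n + 1) / qq TYPE('a) ^ (2 * P)) *
      (\<Sum>k = 0..P - degree r - 1. of_real (qq TYPE('a) ^ (n * k)) * Sr a n ([:0, 1:] ^ (P - degree r - k - 1)))"
    unfolding poly_abs_eq_power_degree[OF assms(1)] using assms(2)
    by (rule sum_shells_rescale[where F="\<lambda>m. Sr a n ([:0, 1:] ^ m)"])
  finally show ?thesis .
qed

lemma Ir_degree_eq:
  fixes a :: "nat \<Rightarrow> 'a::{finite,field}" and r :: "'a poly"
  assumes "r \<noteq> 0" "degree r = P"
  shows "Ir a n P r = of_real (qq TYPE('a) powr (real_of_int (int P * (int n - 2))))"
proof -
  have "Ir a n P r = (\<Sum>v\<in>prefix_zero_vecs (2 * P) (2 * P). S_digits a n P (2 * P) v) /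
                     of_real (qq TYPE('a) ^ (2 * P))"
    using Ir_eq_sum_prefix_zero_vecs[OF assms(1), of P "2 * P"] assms(2) by (simp add: mult_2)
  also have "\<dots> = of_real (qq TYPE('a) ^ (n * P) / qq TYPE('a) ^ (2 * P))"
    by (simp add: sum_prefix_zero_vecs S_digits_zero qq_def)
  also have "qq TYPE('a) ^ (n * P) / qq TYPE('a) ^ (2 * P) = qq TYPE('a) powr (real_of_int (int P * (int n - 2)))"
  proof -
    have "real_of_int (int P * (int n - 2)) = real (n * P) - real (2 * P)"
      by (simp add: algebra_simps)
    then show ?thesis using qq_gt_1[where 'a='a] by (simp only: powr_diff powr_realpow)
  qed
  finally show ?thesis .
qed

theorem lemma3p2:
  fixes a :: "nat \<Rightarrow> 'a::{finite,field}" and n P :: nat and r :: "'a poly"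
  assumes "odd CARD('a)"
    and "n \<ge> 1" and "\<forall>i<n. a i \<noteq> 0"
    and "P \<ge> 1" and "lead_coeff r = 1" and "degree r \<le> P"
  shows "Ir a n P r =
    (if degree r \<le> P - 1 then
       complex_of_real (poly_abs r ^ n * qq TYPE('a) ^ (n + 1) / qq TYPE('a) ^ (2 * P)) *
       (\<Sum>k = 0..P - degree r - 1.
          complex_of_real (qq TYPE('a) ^ (n * k)) * Sr a n ([:0, 1:] ^ (P - degree r - k - 1)))
     else complex_of_real (qq TYPE('a) powr (real_of_int (int P * (int n - 2)))))"
proof -
  have "r \<noteq> 0" using assms(5) by auto
  then show ?thesis
    using assms(4,6) Ir_degree_less[of r P a n] Ir_degree_eq[of r P a n] by auto
qed

end
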